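(* Let $f:\mathbb{R}^n\to\mathbb{R}$ be continuously differentiable and bounded below with $\nabla f$ Lipschitz continuous on $\mathbb{R}^n$, let $s$ be an integer with $0<s<n$, and let $\{\mathbf{x}^k\}$ be the sequence generated by the greedy sparse-simplex method. Then any accumulation point $\mathbf{x}^*$ of $\{\mathbf{x}^k\}$ is an $L_2(f)$-stationary point of the problem (P): minimize $f(\mathbf{x})$ subject to $\|\mathbf{x}\|_0\le s$; i.e. $\nabla_i f(\mathbf{x}^* )=0$ for $i\in I_1(\mathbf{x}^* )$ and $|\nabla_i f(\mathbf{x}^* )|\le L_2(f)M_s(\mathbf{x}^* )$ for $i\in I_0(\mathbf{x}^* )$.
   Context: $\|\mathbf{x}\|_0$ is the number of nonzero components, $C_s=\{\mathbf{x}:\|\mathbf{x}\|_0\le s\}$, $I_1(\mathbf{x})=\{i:x_i\neq0\}$, $I_0(\mathbf{x})=\{i:x_i=0\}$, $M_s(\mathbf{x})$ the $s$-th largest absolute value among components of $\mathbf{x}$, $\mathbf{e}_i$ the $i$-th standard basis vector. For $i\neq j$, $\nabla_{i,j}f(\mathbf{x})\in\mathbb{R}^2$ is the vector of the $i$-th and $j$-th partial derivatives, $L_{i,j}(f)$ is a constant with $\|\nabla_{i,j}f(\mathbf{x})-\nabla_{i,j}f(\mathbf{x}+\mathbf{d})\|\le L_{i,j}(f)\|\mathbf{d}\|$ for all $\mathbf{x}$ and all $\mathbf{d}$ with at most two nonzero components, and $L_2(f)=\max_{i\neq j}L_{i,j}(f)$. Greedy sparse-simplex method (all one-dimensional minima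 assumed attained): choose $\mathbf{x}^0\in C_s$. At step $k$: if $\|\mathbf{x}^k\|_0<s$, for each $i$ let $t_i\in\operatorname{argmin}_t f(\mathbf{x}^k+t\mathbf{e}_i)$, $f_i=\min_t f(\mathbf{x}^k+t\mathbf{e}_i)$, $i_k\in\operatorname{argmin}_i f_i$; if $f_{i_k}<f(\mathbf{x}^k)$ set $\mathbf{x}^{k+1}=\mathbf{x}^k+t_{i_k}\mathbf{e}_{i_k}$, else stop. If $\|\mathbf{x}^k\|_0=s$, for $i\in I_1(\mathbf{x}^k)$, $j=1,\dots,n$ let $t_{i,j}\in\operatorname{argmin}_t f(\mathbf{x}^k-x_i^k\mathbf{e}_i+t\mathbf{e}_j)$, $f_{i,j}$ the minimum value, $(i_k,j_k)\in\operatorname{argmin}f_{i,j}$; if $f_{i_k,j_k}<f(\mathbf{x}^k)$ set $\mathbf{x}^{k+1}=\mathbf{x}^k-x^k_{i_k}\mathbf{e}_{i_k}+t_{i_k,j_k}\mathbf{e}_{j_k}$, else stop. *)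

theory Defs
  imports "HOL-Analysis.Analysis" "HOL-Library.Multiset"
begin

definition ebasis :: "'n::finite \<Rightarrow> real^'n" where
  "ebasis i = axis i 1"

definition supp :: "real^'n::finite \<Rightarrow> 'n set" where
  "supp x = {i. x $ i \<noteq> 0}"

definition l0 :: "real^'n::finite \<Rightarrow> nat" where
  "l0 x = card (supp x)"

text \<open>M_s(x): the s-th largest absolute value among the components of x (s \<ge> 1).\<close>
definition Ms :: "nat \<Rightarrow> real^'n::finite \<Rightarrow> real" where
  "Ms s x = rev (sorted_list_of_multiset (image_mset (\<lambda>i. \<bar>x $ i\<bar>) (mset_set UNIV))) ! (s - 1)"

text \<open>One (non-stopping) iteration of the greedy sparse-simplex method:
  x' is an admissible next iterate computed from x.\<close>
definition gss_step :: "(real^'n::finite \<Rightarrow> real) \<Rightarrow> nat \<Rightarrow> real^'n \<Rightarrow> real^'n \<Rightarrow> bool" where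
  "gss_step f s x x' \<longleftrightarrow>
     (l0 x < s \<and>
       (\<exists>i t. x' = x + t *\<^sub>R ebasis i
          \<and> (\<forall>t'. f x' \<le> f (x + t' *\<^sub>R ebasis i))
          \<and> (\<forall>j t'. f x' \<le> f (x + t' *\<^sub>R ebasis j))
          \<and> f x' < f x))
   \<or> (l0 x = s \<and>
       (\<exists>i\<in>supp x. \<exists>j t. x' = x - (x $ i) *\<^sub>R ebasis i + t *\<^sub>R ebasis j
          \<and> (\<forall>t'. f x' \<le> f (x - (x $ i) *\<^sub>R ebasis i + t' *\<^sub>R ebasis j))
          \<and> (\<forall>i'\<in>supp x. \<forall>j' t'. f x' \<le> f (x - (x $ i') *\<^sub>R ebasis i' + t' *\<^sub>R ebasis j'))
          \<and> f x' < f x))"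

end

theory Submission
  imports Defs
begin

text \<open>
  The iterates decrease strictly, so along a subsequence converging to \<open>x\<^sup>*\<close> every comparison
  \<open>f(x\<^sup>k\<^sup>+\<^sup>1) \<le> f(y\<^sup>k)\<close> made by the method passes to the limit as \<open>f(x\<^sup>*) \<le> f(y)\<close>.
  Hence \<open>x\<^sup>*\<close> minimises \<open>f\<close> along every coordinate in its support, which gives
  \<open>\<nabla>\<^sub>i f(x\<^sup>*) = 0\<close> there. For \<open>i\<close> outside the support one finds a support index \<open>m\<close> with
  \<open>|x\<^sup>*\<^sub>m| \<le> M\<^sub>s(x\<^sup>*)\<close> such that no move of the form ``zero coordinate \<open>m\<close>, then move along \<open>i\<close>''
  decreases \<open>f\<close>; the descent lemma in the two coordinates \<open>i, m\<close> turns this into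
  \<open>|\<nabla>\<^sub>i f(x\<^sup>*)| \<le> L\<^sub>i\<^sub>,\<^sub>m |x\<^sup>*\<^sub>m| \<le> L\<^sub>2(f) M\<^sub>s(x\<^sup>*)\<close>.
\<close>

lemma supp_iff: "i \<in> supp v \<longleftrightarrow> v $ i \<noteq> 0"
  unfolding supp_def by simp

lemma ebasis_nth: "ebasis i $ j = (if j = i then 1 else 0)"
  unfolding ebasis_def by (simp add: axis_def)

lemma inner_ebasis: "v \<bullet> ebasis i = v $ i"
  unfolding ebasis_def by (simp add: inner_axis)

lemma sorted_desc_count_gt_nth:
  fixes xs :: "'a::linorder list"
  assumes sorted: "sorted (rev xs)" and "k < length xs"
  shows "length (filter (\<lambda>a. xs ! k < a) xs) \<le> k"
proof -
  have "\<not> xs ! k < a" if "a \<in> set (drop k xs)" for a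
  proof -
    from that obtain j where "j < length xs - k" "a = xs ! (k + j)"
      by (auto simp: in_set_conv_nth)
    then show ?thesis using sorted_rev_nth_mono[OF sorted, of k "k + j"] by (simp add: not_less)
  qed
  then have "filter (\<lambda>a. xs ! k < a) (drop k xs) = []"
    by (simp add: filter_empty_conv)
  then have "filter (\<lambda>a. xs ! k < a) xs = filter (\<lambda>a. xs ! k < a) (take k xs)"
    by (metis append_Nil2 append_take_drop_id filter_append)
  also have "length \<dots> \<le> length (take k xs)" by (rule length_filter_le)
  finally show ?thesis by simp
qed

lemma
  fixes X :: "real^'n::finite"
  assumes "0 < s" "s \<le> CARD('n)"
  shows Ms_nonneg: "0 \<le> Ms s X" and card_above_Ms_less: "card {i. Ms s X < \<bar>X $ i\<bar>} < s"
proof -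
  define A where "A = image_mset (\<lambda>i. \<bar>X $ i\<bar>) (mset_set (UNIV::'n set))"
  define L where "L = rev (sorted_list_of_multiset A)"
  have Ms_eq: "Ms s X = L ! (s - 1)" unfolding Ms_def L_def A_def by simp
  have mset_L: "mset L = A" unfolding L_def by simp
  have "length L = CARD('n)"
    by (metis mset_L A_def size_image_mset size_mset size_mset_set)
  with assms have idx: "s - 1 < length L" by simp
  have "L ! (s - 1) \<in># A" using idx mset_L by (metis nth_mem set_mset_mset)
  then show "0 \<le> Ms s X" unfolding Ms_eq A_def by auto
  have "card {i. Ms s X < \<bar>X $ i\<bar>} = size (filter_mset (\<lambda>a. Ms s X < a) A)"
    unfolding A_def by (simp add: filter_mset_image_mset filter_mset_mset_set)
  also have "\<dots> = length (filter (\<lambda>a. L ! (s - 1) < a) L)"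
    unfolding Ms_eq mset_L[symmetric] by (simp flip: mset_filter)
  also have "\<dots> \<le> s - 1"
    using sorted_desc_count_gt_nth[OF _ idx] unfolding L_def by simp
  finally show "card {i. Ms s X < \<bar>X $ i\<bar>} < s" using assms(1) by linarith
qed

lemma Ms_ge_support_entry:
  fixes X :: "real^'n::finite"
  assumes "0 < s" "s \<le> CARD('n)" "s \<le> l0 X"
  obtains m where "m \<in> supp X" "\<bar>X $ m\<bar> \<le> Ms s X"
proof (rule ccontr)
  assume "\<not> thesis"
  with that have "supp X \<subseteq> {i. Ms s X < \<bar>X $ i\<bar>}" by force
  then have "l0 X \<le> card {i. Ms s X < \<bar>X $ i\<bar>}" unfolding l0_def by (simp add: card_mono)
  with card_above_Ms_less[OF assms(1,2), of X] assms(3) show False by simp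
qed

lemma inner_two_coordinates:
  "v \<bullet> (a *\<^sub>R ebasis m + b *\<^sub>R ebasis i) = a * v $ m + b * v $ i"
  by (simp add: inner_add_right inner_ebasis mult.commute)

lemma norm_two_coordinates:
  assumes "i \<noteq> m"
  shows "norm (a *\<^sub>R ebasis m + b *\<^sub>R ebasis i) = sqrt (a\<^sup>2 + b\<^sup>2)"
  using assms
  by (simp add: norm_eq_sqrt_inner inner_add_right inner_add_left inner_ebasis ebasis_nth
      power2_eq_square)

lemma l0_two_coordinates_le: "l0 (a *\<^sub>R ebasis m + b *\<^sub>R ebasis i) \<le> 2"
proof -
  have "supp (a *\<^sub>R ebasis m + b *\<^sub>R ebasis i) \<subseteq> {m, i}"
    unfolding supp_def by (auto simp: ebasis_nth)
  then have "l0 (a *\<^sub>R ebasis m + b *\<^sub>R ebasis i) \<le> card {m, i}"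
    unfolding l0_def by (simp add: card_mono)
  also have "\<dots> \<le> 2" by (simp add: card_insert_le_m1)
  finally show ?thesis .
qed

lemma has_real_derivative_along_line:
  assumes "\<And>y. (f has_derivative (\<lambda>h. g y \<bullet> h)) (at y)"
  shows "((\<lambda>t. f (X + t *\<^sub>R d)) has_real_derivative g (X + \<tau> *\<^sub>R d) \<bullet> d) (at \<tau>)"
proof -
  have "((\<lambda>t. X + t *\<^sub>R d) has_derivative (\<lambda>t. t *\<^sub>R d)) (at \<tau>)"
    by (auto intro!: derivative_eq_intros)
  from has_derivative_compose[OF this assms]
  show ?thesis by (simp add: has_field_derivative_def o_def mult_commute_abs)
qed

lemma coordinate_min_imp_partial_zero:
  fixes f :: "real^'n::finite \<Rightarrow> real"
  assumes "\<And>y. (f has_derivative (\<lambda>h. g y \<bullet> h)) (at y)"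
    and "\<And>t. f X \<le> f (X + t *\<^sub>R ebasis i)"
  shows "g X $ i = 0"
proof -
  have "((\<lambda>t. f (X + t *\<^sub>R ebasis i)) has_real_derivative g X $ i) (at 0)"
    using has_real_derivative_along_line[OF assms(1), of X "ebasis i" 0] by (simp add: inner_ebasis)
  then show ?thesis
    by (rule DERIV_local_min[where d=1]) (use assms(2) in auto)
qed

lemma cauchy_schwarz_2: "a * p + b * q \<le> sqrt (p\<^sup>2 + q\<^sup>2) * sqrt (a\<^sup>2 + b\<^sup>2)" for a b p q :: real
proof -
  have "(a * p + b * q)\<^sup>2 \<le> (p\<^sup>2 + q\<^sup>2) * (a\<^sup>2 + b\<^sup>2)"
    using sum_squares_ge_zero[of "a * q - b * p" 0] by (simp add: power2_eq_square algebra_simps)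
  then have "\<bar>a * p + b * q\<bar> \<le> sqrt ((p\<^sup>2 + q\<^sup>2) * (a\<^sup>2 + b\<^sup>2))"
    by (metis real_sqrt_abs real_sqrt_le_mono)
  then show ?thesis by (simp add: real_sqrt_mult)
qed

lemma two_coordinate_descent:
  fixes f :: "real^'n::finite \<Rightarrow> real"
  assumes grad: "\<And>y. (f has_derivative (\<lambda>h. g y \<bullet> h)) (at y)"
    and lip: "\<And>y d. l0 d \<le> 2 \<Longrightarrow>
        sqrt ((g y $ i - g (y + d) $ i)\<^sup>2 + (g y $ m - g (y + d) $ m)\<^sup>2) \<le> L * norm d"
    and "i \<noteq> m"
  shows "f (X + (a *\<^sub>R ebasis m + b *\<^sub>R ebasis i))
    \<le> f X + (a * g X $ m + b * g X $ i) + L / 2 * (a\<^sup>2 + b\<^sup>2)"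
proof -
  define d where "d = a *\<^sub>R ebasis m + b *\<^sub>R ebasis i"
  define q where "q = a\<^sup>2 + b\<^sup>2"
  define \<psi> where "\<psi> = (\<lambda>\<tau>. f (X + \<tau> *\<^sub>R d) - \<tau> * (g X \<bullet> d) - L / 2 * \<tau>\<^sup>2 * q)"
  have "\<psi> 1 \<le> \<psi> 0"
  proof (rule DERIV_nonpos_imp_nonincreasing[of 0 1])
    fix \<tau> :: real assume "0 \<le> \<tau>" "\<tau> \<le> 1"
    define p where "p = g (X + \<tau> *\<^sub>R d) - g X"
    have deriv: "(\<psi> has_real_derivative (g (X + \<tau> *\<^sub>R d) \<bullet> d - g X \<bullet> d - L * \<tau> * q)) (at \<tau>)"
      unfolding \<psi>_def
      by (rule derivative_eq_intros has_real_derivative_along_line[OF grad, of X d \<tau>] | simp)+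
    have "g (X + \<tau> *\<^sub>R d) \<bullet> d - g X \<bullet> d = a * p $ m + b * p $ i"
      unfolding d_def p_def inner_two_coordinates by (simp add: algebra_simps)
    also have "\<dots> \<le> sqrt ((p $ i)\<^sup>2 + (p $ m)\<^sup>2) * sqrt q"
      unfolding q_def using cauchy_schwarz_2[of a "p $ m" b "p $ i"] by (simp add: add.commute)
    also have "\<dots> \<le> L * norm (\<tau> *\<^sub>R d) * sqrt q"
    proof (rule mult_right_mono)
      show "sqrt ((p $ i)\<^sup>2 + (p $ m)\<^sup>2) \<le> L * norm (\<tau> *\<^sub>R d)"
        using lip[of "\<tau> *\<^sub>R d" X] l0_two_coordinates_le[of "\<tau> * a" m "\<tau> * b" i]
        unfolding p_def d_def by (simp add: power2_commute scaleR_add_right)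
    qed (simp add: q_def)
    also have "\<dots> = L * \<tau> * q"
      using \<open>0 \<le> \<tau>\<close> norm_two_coordinates[OF \<open>i \<noteq> m\<close>, of a b] unfolding d_def q_def by simp
    finally show "\<exists>y. (\<psi> has_real_derivative y) (at \<tau>) \<and> y \<le> 0"
      using deriv by auto
  qed simp
  then show ?thesis unfolding \<psi>_def d_def q_def inner_two_coordinates by simp
qed

lemma quadratic_nonneg_imp_abs_le:
  fixes G L c :: real
  assumes nonneg: "\<And>t. 0 \<le> t * G + L / 2 * (c\<^sup>2 + t\<^sup>2)" and "0 \<le> L"
  shows "\<bar>G\<bar> \<le> L * \<bar>c\<bar>"
proof (cases "L = 0")
  case True
  with nonneg[of "- G"] show ?thesis by (auto simp: mult_le_0_iff)
next
  case False
  with \<open>0 \<le> L\<close> have "0 < L" by simp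
  have "0 \<le> 2 * L * ((- G / L) * G + L / 2 * (c\<^sup>2 + (- G / L)\<^sup>2))"
    using nonneg[of "- G / L"] \<open>0 < L\<close> by simp
  also have "\<dots> = (L * c)\<^sup>2 - G\<^sup>2"
    using \<open>0 < L\<close> by (simp add: field_simps power2_eq_square)
  finally have "\<bar>G\<bar> \<le> \<bar>L * c\<bar>"
    by (simp add: abs_le_square_iff)
  then show ?thesis
    using \<open>0 < L\<close> by (simp add: abs_mult)
qed

lemma partial_bound_at_swap_min:
  fixes f :: "real^'n::finite \<Rightarrow> real"
  assumes grad: "\<And>y. (f has_derivative (\<lambda>h. g y \<bullet> h)) (at y)"
    and lip: "\<And>y d. l0 d \<le> 2 \<Longrightarrow>
        sqrt ((g y $ i - g (y + d) $ i)\<^sup>2 + (g y $ m - g (y + d) $ m)\<^sup>2) \<le> L * norm d"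
    and "i \<noteq> m" "0 \<le> L" "g X $ m = 0"
    and swap_min: "\<And>t. f X \<le> f (X - (X $ m) *\<^sub>R ebasis m + t *\<^sub>R ebasis i)"
  shows "\<bar>g X $ i\<bar> \<le> L * \<bar>X $ m\<bar>"
proof (rule quadratic_nonneg_imp_abs_le[OF _ \<open>0 \<le> L\<close>])
  fix t
  have "f X \<le> f (X + ((- X $ m) *\<^sub>R ebasis m + t *\<^sub>R ebasis i))"
    using swap_min[of t] by (simp add: algebra_simps)
  also have "\<dots> \<le> f X + (- X $ m * g X $ m + t * g X $ i) + L / 2 * ((- X $ m)\<^sup>2 + t\<^sup>2)"
    by (rule two_coordinate_descent[OF grad lip \<open>i \<noteq> m\<close>])
  finally show "0 \<le> t * g X $ i + L / 2 * ((X $ m)\<^sup>2 + t\<^sup>2)"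
    using \<open>g X $ m = 0\<close> by simp
qed

lemma descent_subsequence_limit_le:
  fixes f F :: "'a::metric_space \<Rightarrow> real"
  assumes dec: "\<And>k. f (x (Suc k)) < f (x k)"
    and "strict_mono r" and conv: "(x \<circ> r) \<longlonglongrightarrow> X"
    and "isCont f X" "isCont F X"
    and freq: "\<exists>\<^sub>F k in sequentially. f (x (Suc (r k))) \<le> F (x (r k))"
  shows "f X \<le> F X"
proof (rule ccontr)
  assume "\<not> f X \<le> F X"
  have f_lim: "(\<lambda>k. f (x (r k))) \<longlonglongrightarrow> f X"
    using isCont_tendsto_compose[OF \<open>isCont f X\<close> conv] by (simp add: o_def)
  have F_lim: "(\<lambda>k. F (x (r k))) \<longlonglongrightarrow> F X"
    using isCont_tendsto_compose[OF \<open>isCont F X\<close> conv] by (simp add: o_def)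
  have "decseq (\<lambda>k. f (x k))" using dec by (simp add: decseq_Suc_iff less_imp_le)
  have lower: "f X \<le> f (x j)" for j
  proof (rule tendsto_upperbound[OF f_lim])
    show "\<forall>\<^sub>F k in sequentially. f (x (r k)) \<le> f (x j)"
    proof (rule eventually_sequentiallyI)
      fix k assume "j \<le> k"
      with seq_suble[OF \<open>strict_mono r\<close>, of k] have "j \<le> r k" by simp
      then show "f (x (r k)) \<le> f (x j)" using decseqD[OF \<open>decseq (\<lambda>k. f (x k))\<close>] by blast
    qed
  qed simp
  have "\<forall>\<^sub>F k in sequentially. F (x (r k)) < f X"
    using order_tendstoD(2)[OF F_lim] \<open>\<not> f X \<le> F X\<close> by simp
  from frequently_eventually_conj[OF freq this] have "\<exists>\<^sub>F k in sequentially. False"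
  proof (rule frequently_elim1)
    fix k assume "F (x (r k)) < f X \<and> f (x (Suc (r k))) \<le> F (x (r k))"
    with lower[of "Suc (r k)"] show False by simp
  qed
  then show False by simp
qed

locale greedy_sparse_simplex_run =
  fixes f :: "real^'n::finite \<Rightarrow> real" and s :: nat
    and x :: "nat \<Rightarrow> real^'n" and r :: "nat \<Rightarrow> nat" and xstar :: "real^'n"
  assumes f_cont: "\<And>y. isCont f y"
    and steps: "\<And>k. gss_step f s (x k) (x (Suc k))"
    and r_mono: "strict_mono r"
    and r_conv: "(x \<circ> r) \<longlonglongrightarrow> xstar"
begin

lemma decreasing: "f (x (Suc k)) < f (x k)"
  using steps[of k] unfolding gss_step_def by blast

lemma l0_le: "l0 (x k) \<le> s"
proof -
  have "l0 (x k) < s \<or> l0 (x k) = s" using steps[of k] unfolding gss_step_def by blast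
  then show ?thesis by linarith
qed

lemma step_le_coordinate_move:
  "l0 (x k) < s \<Longrightarrow> f (x (Suc k)) \<le> f (x k + t *\<^sub>R ebasis j)"
  using steps[of k] unfolding gss_step_def by force

lemma step_le_swap:
  "l0 (x k) = s \<Longrightarrow> m \<in> supp (x k) \<Longrightarrow>
    f (x (Suc k)) \<le> f (x k - (x k $ m) *\<^sub>R ebasis m + t *\<^sub>R ebasis j)"
  using steps[of k] unfolding gss_step_def by force

text \<open>A move along a support coordinate is the swap of that coordinate with itself.\<close>

lemma step_le_support_coordinate_move:
  assumes "m \<in> supp (x k)"
  shows "f (x (Suc k)) \<le> f (x k + t *\<^sub>R ebasis m)"
proof (cases "l0 (x k) < s")
  case True then show ?thesis by (rule step_le_coordinate_move)
next
  case False
  with l0_le[of k] have "l0 (x k) = s" by linarith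
  from step_le_swap[OF this assms, of "t + x k $ m" m] show ?thesis
    by (simp add: algebra_simps)
qed

lemma limit_le:
  assumes "isCont F xstar" "\<exists>\<^sub>F k in sequentially. f (x (Suc (r k))) \<le> F (x (r k))"
  shows "f xstar \<le> F xstar"
  by (rule descent_subsequence_limit_le[OF decreasing r_mono r_conv f_cont assms])

lemma limit_le_coordinate_move:
  assumes "\<exists>\<^sub>F k in sequentially. f (x (Suc (r k))) \<le> f (x (r k) + t *\<^sub>R ebasis i)"
  shows "f xstar \<le> f (xstar + t *\<^sub>R ebasis i)"
proof (rule limit_le[OF _ assms])
  show "isCont (\<lambda>y. f (y + t *\<^sub>R ebasis i)) xstar"
    by (rule isCont_o2[OF _ f_cont]) (intro continuous_intros)
qed

lemma limit_le_swap:
  assumes "\<exists>\<^sub>F k in sequentially. l0 (x (r k)) = s \<and> m \<in> supp (x (r k))"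
  shows "f xstar \<le> f (xstar - (xstar $ m) *\<^sub>R ebasis m + t *\<^sub>R ebasis i)"
proof (rule limit_le)
  show "isCont (\<lambda>y. f (y - (y $ m) *\<^sub>R ebasis m + t *\<^sub>R ebasis i)) xstar"
    by (rule isCont_o2[OF _ f_cont]) (intro continuous_intros)
  show "\<exists>\<^sub>F k in sequentially. f (x (Suc (r k)))
      \<le> f (x (r k) - (x (r k) $ m) *\<^sub>R ebasis m + t *\<^sub>R ebasis i)"
    using assms by (rule frequently_elim1) (intro step_le_swap; simp)
qed

lemma eventually_in_supp:
  assumes "m \<in> supp xstar"
  shows "\<forall>\<^sub>F k in sequentially. m \<in> supp (x (r k))"
proof -
  have "(\<lambda>k. x (r k) $ m) \<longlonglongrightarrow> xstar $ m"
    using tendsto_vec_nth[OF r_conv, of m] by (simp add: o_def)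
  from tendsto_imp_eventually_ne[OF this] assms show ?thesis by (simp add: supp_iff)
qed

lemma limit_support_coordinate_min:
  assumes "i \<in> supp xstar"
  shows "f xstar \<le> f (xstar + t *\<^sub>R ebasis i)"
proof (rule limit_le_coordinate_move)
  have "\<forall>\<^sub>F k in sequentially. f (x (Suc (r k))) \<le> f (x (r k) + t *\<^sub>R ebasis i)"
    using eventually_in_supp[OF assms] by (rule eventually_mono) (rule step_le_support_coordinate_move)
  then show "\<exists>\<^sub>F k in sequentially. f (x (Suc (r k))) \<le> f (x (r k) + t *\<^sub>R ebasis i)"
    by (rule eventually_frequently[OF sequentially_bot])
qed

text \<open>Infinitely often the iterate has a nonzero entry outside \<open>supp x\<^sup>*\<close>; swapping it out
  is a plain coordinate move in the limit.\<close>

lemma limit_coordinate_min_if_sparse: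
  assumes full: "\<forall>\<^sub>F k in sequentially. l0 (x (r k)) = s" and "l0 xstar < s"
  shows "f xstar \<le> f (xstar + t *\<^sub>R ebasis i)"
proof -
  have "\<exists>m\<in>UNIV. l0 (x (r k)) = s \<and> m \<in> supp (x (r k)) \<and> m \<notin> supp xstar"
    if "l0 (x (r k)) = s" for k
  proof (rule ccontr)
    assume "\<not> ?thesis"
    with that have "supp (x (r k)) \<subseteq> supp xstar" by blast
    then have "l0 (x (r k)) \<le> l0 xstar" unfolding l0_def by (rule card_mono[OF finite])
    with that \<open>l0 xstar < s\<close> show False by simp
  qed
  from eventually_mono[OF full this] have "\<exists>\<^sub>F k in sequentially.
      \<exists>m\<in>UNIV. l0 (x (r k)) = s \<and> m \<in> supp (x (r k)) \<and> m \<notin> supp xstar"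
    by (rule eventually_frequently[OF sequentially_bot])
  from frequently_bex_finite[OF finite this] obtain m
    where m: "\<exists>\<^sub>F k in sequentially. l0 (x (r k)) = s \<and> m \<in> supp (x (r k)) \<and> m \<notin> supp xstar"
    by blast
  from frequently_ex[OF m] have "xstar $ m = 0" by (auto simp: supp_iff)
  moreover have "\<exists>\<^sub>F k in sequentially. l0 (x (r k)) = s \<and> m \<in> supp (x (r k))"
    using m by (rule frequently_elim1) simp
  ultimately show ?thesis
    using limit_le_swap[of m t i] by simp
qed

lemma limit_coordinate_or_swap_min:
  assumes "0 < s" "s \<le> CARD('n)"
  shows "(\<forall>t. f xstar \<le> f (xstar + t *\<^sub>R ebasis i)) \<or>
    (\<exists>m\<in>supp xstar. \<bar>xstar $ m\<bar> \<le> Ms s xstar \<and>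
      (\<forall>t. f xstar \<le> f (xstar - (xstar $ m) *\<^sub>R ebasis m + t *\<^sub>R ebasis i)))"
proof (cases "\<exists>\<^sub>F k in sequentially. l0 (x (r k)) < s")
  case True
  have "f xstar \<le> f (xstar + t *\<^sub>R ebasis i)" for t
    by (rule limit_le_coordinate_move, rule frequently_elim1[OF True], rule step_le_coordinate_move)
  then show ?thesis by blast
next
  case False
  have "l0 (x (r k)) = s" if "\<not> l0 (x (r k)) < s" for k
    using that l0_le[of "r k"] by linarith
  with False have full: "\<forall>\<^sub>F k in sequentially. l0 (x (r k)) = s"
    unfolding not_frequently by (rule eventually_mono)
  show ?thesis
  proof (cases "l0 xstar < s")
    case True
    then show ?thesis using limit_coordinate_min_if_sparse[OF full] by blast
  next
    case False
    then have "s \<le> l0 xstar" by simp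
    then obtain m where m: "m \<in> supp xstar" "\<bar>xstar $ m\<bar> \<le> Ms s xstar"
      by (rule Ms_ge_support_entry[OF assms])
    have "\<forall>\<^sub>F k in sequentially. l0 (x (r k)) = s \<and> m \<in> supp (x (r k))"
      using full eventually_in_supp[OF m(1)] by (rule eventually_conj)
    then have "\<exists>\<^sub>F k in sequentially. l0 (x (r k)) = s \<and> m \<in> supp (x (r k))"
      by (rule eventually_frequently[OF sequentially_bot])
    with m show ?thesis using limit_le_swap by blast
  qed
qed

end

lemma block_lipschitz_nonneg:
  fixes g :: "real^'n::finite \<Rightarrow> real^'n"
  assumes "i \<noteq> j"
    and lip: "\<And>y d. l0 d \<le> 2 \<Longrightarrow>
        sqrt ((g y $ i - g (y + d) $ i)\<^sup>2 + (g y $ j - g (y + d) $ j)\<^sup>2) \<le> L * norm d"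
  shows "0 \<le> L"
proof -
  define d where "d = 0 *\<^sub>R ebasis j + 1 *\<^sub>R ebasis i"
  have "0 \<le> sqrt ((g 0 $ i - g (0 + d) $ i)\<^sup>2 + (g 0 $ j - g (0 + d) $ j)\<^sup>2)"
    by simp
  also have "\<dots> \<le> L * norm d"
    unfolding d_def by (rule lip) (rule l0_two_coordinates_le)
  also have "norm d = 1"
    unfolding d_def using norm_two_coordinates[OF \<open>i \<noteq> j\<close>, of 0 1] by simp
  finally show ?thesis by simp
qed

lemma offdiag_le_Max:
  fixes L :: "'n::finite \<Rightarrow> 'n \<Rightarrow> real"
  assumes "i \<noteq> j"
  shows "L i j \<le> Max {L i' j' | i' j'. i' \<noteq> j'}"
proof (rule Max_ge)
  show "finite {L i' j' | i' j'. i' \<noteq> j'}"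
    by (rule finite_subset[of _ "range (case_prod L)"]) auto
qed (use assms in blast)

lemma partial_bound_off_support:
  fixes f :: "real^'n::finite \<Rightarrow> real"
  assumes grad: "\<And>y. (f has_derivative (\<lambda>h. g y \<bullet> h)) (at y)"
    and lip: "\<And>i j y d. i \<noteq> j \<Longrightarrow> l0 d \<le> 2 \<Longrightarrow>
        sqrt ((g y $ i - g (y + d) $ i)\<^sup>2 + (g y $ j - g (y + d) $ j)\<^sup>2) \<le> L i j * norm d"
    and "1 < CARD('n)" "0 \<le> M" "i \<notin> supp X"
    and support_zero: "\<And>m. m \<in> supp X \<Longrightarrow> g X $ m = 0"
    and min: "(\<forall>t. f X \<le> f (X + t *\<^sub>R ebasis i)) \<or>
      (\<exists>m\<in>supp X. \<bar>X $ m\<bar> \<le> M \<and> (\<forall>t. f X \<le> f (X - (X $ m) *\<^sub>R ebasis m + t *\<^sub>R ebasis i)))"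
  shows "\<bar>g X $ i\<bar> \<le> Max {L i' j' | i' j'. i' \<noteq> j'} * M"
  using min
proof (elim disjE bexE conjE)
  assume "\<forall>t. f X \<le> f (X + t *\<^sub>R ebasis i)"
  then have "g X $ i = 0" by (intro coordinate_min_imp_partial_zero[OF grad]) blast
  obtain j where "j \<noteq> i"
  proof (cases "\<exists>j. j \<noteq> i")
    case False
    then have "(UNIV :: 'n set) = {i}" by auto
    then have "CARD('n) = 1" using card_1_singleton_iff by auto
    with \<open>1 < CARD('n)\<close> show ?thesis by simp
  qed blast
  with block_lipschitz_nonneg[OF _ lip] offdiag_le_Max[of j i L]
  have "0 \<le> Max {L i' j' | i' j'. i' \<noteq> j'}" by (meson order_trans)
  with \<open>g X $ i = 0\<close> \<open>0 \<le> M\<close> show ?thesis by simp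
next
  fix m assume m: "m \<in> supp X" "\<bar>X $ m\<bar> \<le> M"
    "\<forall>t. f X \<le> f (X - (X $ m) *\<^sub>R ebasis m + t *\<^sub>R ebasis i)"
  with \<open>i \<notin> supp X\<close> have "i \<noteq> m" by blast
  note L_nonneg = block_lipschitz_nonneg[OF \<open>i \<noteq> m\<close> lip[OF \<open>i \<noteq> m\<close>]]
  have "\<bar>g X $ i\<bar> \<le> L i m * \<bar>X $ m\<bar>"
    using m by (intro partial_bound_at_swap_min[OF grad lip[OF \<open>i \<noteq> m\<close>] \<open>i \<noteq> m\<close> L_nonneg
          support_zero]) auto
  also have "\<dots> \<le> Max {L i' j' | i' j'. i' \<noteq> j'} * M"
    using m(2) offdiag_le_Max[OF \<open>i \<noteq> m\<close>, of L] L_nonneg by (intro mult_mono) auto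
  finally show ?thesis .
qed

theorem corollary3p2:
  fixes f :: "real^'n \<Rightarrow> real"
    and g :: "real^'n \<Rightarrow> real^'n"
    and Lij :: "'n \<Rightarrow> 'n \<Rightarrow> real"
    and s :: nat
    and x :: "nat \<Rightarrow> real^'n"
    and xstar :: "real^'n"
  assumes grad: "\<And>y. (f has_derivative (\<lambda>h. g y \<bullet> h)) (at y)"
    and grad_cont: "continuous_on UNIV g"
    and grad_lip: "\<exists>L. L-lipschitz_on UNIV g"
    and bdd: "bdd_below (range f)"
    and s_pos: "0 < s" and s_lt: "s < CARD('n)"
    and attained: "\<And>y i. \<exists>t. \<forall>t'. f (y + t *\<^sub>R ebasis i) \<le> f (y + t' *\<^sub>R ebasis i)"
    and Lij_prop: "\<And>i j y d. i \<noteq> j \<Longrightarrow> l0 d \<le> 2 \<Longrightarrow>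
        sqrt ((g y $ i - g (y + d) $ i)\<^sup>2 + (g y $ j - g (y + d) $ j)\<^sup>2) \<le> Lij i j * norm d"
    and x0: "l0 (x 0) \<le> s"
    and steps: "\<And>k. gss_step f s (x k) (x (Suc k))"
    and acc: "\<exists>r. strict_mono r \<and> (x \<circ> r) \<longlonglongrightarrow> xstar"
  shows "(\<forall>i\<in>supp xstar. g xstar $ i = 0) \<and>
         (\<forall>i. i \<notin> supp xstar \<longrightarrow>
            \<bar>g xstar $ i\<bar> \<le> Max {Lij i' j' | i' j'. i' \<noteq> j'} * Ms s xstar)"
proof -
  obtain r where "strict_mono r" "(x \<circ> r) \<longlonglongrightarrow> xstar" using acc by blast
  moreover have "isCont f y" for y using grad has_derivative_continuous by blast
  ultimately interpret greedy_sparse_simplex_run f s x r xstar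
    using steps by unfold_locales auto
  have support: "g xstar $ i = 0" if "i \<in> supp xstar" for i
    by (rule coordinate_min_imp_partial_zero[OF grad limit_support_coordinate_min[OF that]])
  have "\<bar>g xstar $ i\<bar> \<le> Max {Lij i' j' | i' j'. i' \<noteq> j'} * Ms s xstar"
    if "i \<notin> supp xstar" for i
  proof (rule partial_bound_off_support[OF grad Lij_prop _ _ that support])
    show "1 < CARD('n)" using s_pos s_lt by simp
    show "0 \<le> Ms s xstar" using Ms_nonneg[OF s_pos less_imp_le[OF s_lt]] .
    show "(\<forall>t. f xstar \<le> f (xstar + t *\<^sub>R ebasis i)) \<or> (\<exists>m\<in>supp xstar.
        \<bar>xstar $ m\<bar> \<le> Ms s xstar \<and> (\<forall>t. f xstar \<le> f (xstar - xstar $ m *\<^sub>R ebasis m + t *\<^sub>R ebasis i)))"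
      by (rule limit_coordinate_or_swap_min[OF s_pos less_imp_le[OF s_lt]])
  qed
  with support show ?thesis by blast
qed

end
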